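(* For a positive integer $n$ and $1\le k\le n+1$, say that $k$ is reconstructing (resp. directed-reconstructing) for $n$ if any two permutations of $[n]\cup\{0,n+1\}$ having the same $k$-profile (resp. the same directed $k$-profile) are equal, i.e. every $k$-profile (resp. directed $k$-profile) is the $k$-profile of at most one permutation. Let $k_u(n)$ (resp. $k_d(n)$) be the minimum reconstructing (resp. directed-reconstructing) $k$. Then: (a) $k_u(n)=\max\{1,n-3\}$; (b) $k_d(n)\ge \lceil (n-3)/2\rceil$ for $n\ge 4$, and $k_d(n)=1$ for $n=1,2,3$.
   Context: $[n]=\{1,\dots,n\}$. Permutations are of $[n]\cup\{0,n+1\}$, always with $0$ at the leftmost position and $n+1$ at the rightmost position. For a permutation $P$ and elements $t<t+i$, let $\min_{t,t+i}$ and $\max_{t,t+i}$ be the minimum and maximum of the elements located on $P$ in the interval delimited by the element $t$ (included) and the element $t+i$ (included). The $k$-profile of $P$ ($1\le k\le n+1$) is the set of constraints $\{(t,t+i,[\min_{t,t+i},\max_{t,t+i}]) : 1\le i\le k,\ 0\le t\le n+1-i\}$ (no information on which of $t$, $t+i$ is to the left). The directed $k$-profile of $P$ consists of the same constraints together with, for each such pair, the information whether $t$ is to the left or to the right of $t+i$ in $P$. *)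

theory Defs
  imports Complex_Main
begin

definition perms :: "nat \<Rightarrow> nat list set" where
  "perms n = {xs. distinct xs \<and> set xs = {0..n+1} \<and> xs ! 0 = 0 \<and> last xs = n + 1}"

definition pos :: "nat list \<Rightarrow> nat \<Rightarrow> nat" where
  "pos xs a = (THE j. j < length xs \<and> xs ! j = a)"

definition between :: "nat list \<Rightarrow> nat \<Rightarrow> nat \<Rightarrow> nat set" where
  "between xs a b = {xs ! j | j. min (pos xs a) (pos xs b) \<le> j \<and> j \<le> max (pos xs a) (pos xs b)}"

definition k_profile :: "nat \<Rightarrow> nat \<Rightarrow> nat list \<Rightarrow> (nat \<times> nat \<times> nat \<times> nat) set" where
  "k_profile n k xs = {(t, t + i, Min (between xs t (t + i)), Max (between xs t (t + i))) | t i.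
      1 \<le> i \<and> i \<le> k \<and> t + i \<le> n + 1}"

definition directed_k_profile ::
    "nat \<Rightarrow> nat \<Rightarrow> nat list \<Rightarrow> (nat \<times> nat \<times> nat \<times> nat \<times> bool) set" where
  "directed_k_profile n k xs = {(t, t + i, Min (between xs t (t + i)), Max (between xs t (t + i)),
      pos xs t < pos xs (t + i)) | t i. 1 \<le> i \<and> i \<le> k \<and> t + i \<le> n + 1}"

definition reconstructing :: "nat \<Rightarrow> nat \<Rightarrow> bool" where
  "reconstructing n k \<longleftrightarrow> (\<forall>P\<in>perms n. \<forall>Q\<in>perms n. k_profile n k P = k_profile n k Q \<longrightarrow> P = Q)"

definition directed_reconstructing :: "nat \<Rightarrow> nat \<Rightarrow> bool" where
  "directed_reconstructing n k \<longleftrightarrow>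
     (\<forall>P\<in>perms n. \<forall>Q\<in>perms n. directed_k_profile n k P = directed_k_profile n k Q \<longrightarrow> P = Q)"

definition k_u :: "nat \<Rightarrow> nat" where
  "k_u n = (LEAST k. 1 \<le> k \<and> k \<le> n + 1 \<and> reconstructing n k)"

definition k_d :: "nat \<Rightarrow> nat" where
  "k_d n = (LEAST k. 1 \<le> k \<and> k \<le> n + 1 \<and> directed_reconstructing n k)"

end

theory Submission
  imports Defs "HOL-Combinatorics.Multiset_Permutations"
begin

text \<open>Upper bound: suppose \<open>P \<noteq> Q\<close> have the same \<open>(n-3)\<close>-profile and let \<open>j\<close> be the first
  position where they differ, with common predecessor \<open>s\<close> and entries \<open>x = P!j\<close>, \<open>y = Q!j\<close>.
  For an earlier entry \<open>a = P!i\<close> with \<open>|a - x| \<le> n-3\<close> the stretch of \<open>Q\<close> between \<open>a\<close>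
  and \<open>x\<close> contains \<open>y\<close> and has the extrema of the corresponding stretch of \<open>P\<close>, so \<open>y\<close> lies
  between the extrema of \<open>P\<close> on positions \<open>i..j\<close>. With \<open>a = s\<close> this traps \<open>y\<close> between \<open>s\<close> and \<open>x\<close>
  and \<open>x\<close> between \<open>s\<close> and \<open>y\<close>, which is absurd; it remains to rule out that \<open>s\<close> is at
  distance more than \<open>n-3\<close> from \<open>x\<close> or \<open>y\<close>, which leaves a handful of configurations near the
  start of the permutations.

  Lower bounds: in \<open>0, \<dots>, 1, n, x, y, n+1\<close> the swap of \<open>x\<close> and \<open>y\<close> is invisible to every
  constraint on a pair of values closer than \<open>n-3\<close> (for \<open>x = 2, y = 3\<close>), resp. closer than about
  \<open>n/2\<close> when orientations are recorded (for \<open>x = 2, y = k+3\<close>). For \<open>n \<le> 4\<close> the \<open>1\<close>-profile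
  is shown to be injective by evaluation.\<close>

section \<open>Positions and stretches\<close>

lemma permsD:
  assumes "P \<in> perms n"
  shows "distinct P" "set P = {0..n+1}" "length P = n+2" "P!0 = 0" "P!(n+1) = n+1"
proof -
  show d: "distinct P" and "set P = {0..n+1}" using assms by (auto simp: perms_def)
  then show l: "length P = n+2" using distinct_card[OF d] by simp
  show "P!0 = 0" using assms by (simp add: perms_def)
  have "last P = n+1" using assms by (simp add: perms_def)
  moreover have "P \<noteq> []" using l by auto
  ultimately show "P!(n+1) = n+1" using l by (simp add: last_conv_nth)
qed

lemma pos_nth: "distinct xs \<Longrightarrow> i < length xs \<Longrightarrow> pos xs (xs!i) = i"
  unfolding pos_def by (rule the_equality) (auto simp: nth_eq_iff_index_eq)

lemma pos_less_length_nth_pos: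
  assumes "a \<in> set xs" "distinct xs"
  shows "pos xs a < length xs \<and> xs ! pos xs a = a"
proof -
  obtain i where "i < length xs" "xs!i = a" using assms(1) by (auto simp: in_set_conv_nth)
  then show ?thesis using pos_nth[OF assms(2)] by auto
qed

context
  fixes n :: nat and P :: "nat list"
  assumes P: "P \<in> perms n"
begin

lemma perms_nth_le: "i \<le> n+1 \<Longrightarrow> P!i \<le> n+1"
  using permsD[OF P] nth_mem[of i P] by auto

lemma perms_pos_nth: "i \<le> n+1 \<Longrightarrow> pos P (P!i) = i"
  using permsD[OF P] pos_nth by auto

lemma perms_pos_le: "e \<le> n+1 \<Longrightarrow> pos P e \<le> n+1"
  and perms_nth_pos: "e \<le> n+1 \<Longrightarrow> P ! pos P e = e"
  using pos_less_length_nth_pos[of e P] permsD[OF P] by auto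

lemma perms_pos_inj: "e \<le> n+1 \<Longrightarrow> e' \<le> n+1 \<Longrightarrow> pos P e = pos P e' \<Longrightarrow> e = e'"
  by (metis perms_nth_pos)

lemma perms_pos_eq_iff: "e \<le> n+1 \<Longrightarrow> i \<le> n+1 \<Longrightarrow> pos P e = i \<longleftrightarrow> P!i = e"
  using perms_pos_nth perms_nth_pos by metis

lemma perms_pos_0: "pos P 0 = 0"
  using perms_pos_nth[of 0] permsD(4)[OF P] by simp

lemma perms_pos_Suc_n: "pos P (n+1) = n+1"
  using perms_pos_nth[of "n+1"] permsD(5)[OF P] by simp

lemma perms_pos_ge:
  assumes "e \<le> n+1" "\<And>i. i < m \<Longrightarrow> P!i \<noteq> e" shows "m \<le> pos P e"
  using assms(2)[of "pos P e"] perms_nth_pos[OF assms(1)] by linarith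

lemma perms_pos_le_n:
  assumes "e \<le> n" shows "pos P e \<le> n"
proof -
  have "pos P e \<noteq> pos P (n+1)" using perms_pos_inj[of e "n+1"] assms by auto
  then show ?thesis using perms_pos_le[of e] perms_pos_Suc_n assms by simp
qed

lemma perms_pos_gt_0:
  assumes "e \<le> n+1" "e \<noteq> 0" shows "0 < pos P e"
proof (rule ccontr)
  assume "\<not> 0 < pos P e"
  then have "pos P e = pos P 0" using perms_pos_0 by simp
  then show False using perms_pos_inj[of e 0] assms by simp
qed

lemma mem_between_iff:
  assumes "a \<le> n+1" "b \<le> n+1"
  shows "e \<in> between P a b \<longleftrightarrow>
    e \<le> n+1 \<and> min (pos P a) (pos P b) \<le> pos P e \<and> pos P e \<le> max (pos P a) (pos P b)"
proof
  assume "e \<in> between P a b"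
  then obtain i where i: "e = P!i" "min (pos P a) (pos P b) \<le> i" "i \<le> max (pos P a) (pos P b)"
    unfolding between_def by blast
  have "max (pos P a) (pos P b) \<le> n+1" using perms_pos_le assms by simp
  with i have "i \<le> n+1" by linarith
  then show "e \<le> n+1 \<and> min (pos P a) (pos P b) \<le> pos P e \<and> pos P e \<le> max (pos P a) (pos P b)"
    using i perms_pos_nth[of i] perms_nth_le[of i] by simp
next
  assume e: "e \<le> n+1 \<and> min (pos P a) (pos P b) \<le> pos P e \<and> pos P e \<le> max (pos P a) (pos P b)"
  then have "e = P ! pos P e" using perms_nth_pos by simp
  then show "e \<in> between P a b" unfolding between_def using e by (intro CollectI exI[of _ "pos P e"]) simp
qed

context
  fixes a b :: nat
  assumes ab: "a \<le> n+1" "b \<le> n+1"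
begin

lemma between_subset: "between P a b \<subseteq> {0..n+1}"
proof
  fix e assume "e \<in> between P a b"
  then show "e \<in> {0..n+1}" using mem_between_iff[OF ab] by simp
qed

lemma finite_between: "finite (between P a b)"
  using between_subset finite_subset by blast

lemma left_mem_between: "a \<in> between P a b"
  using mem_between_iff[OF ab] ab by simp_all

lemma Min_between_mem: "Min (between P a b) \<in> between P a b"
  using finite_between left_mem_between by (metis Min_in empty_iff)

lemma Max_between_mem: "Max (between P a b) \<in> between P a b"
  using finite_between left_mem_between by (metis Max_in empty_iff)

lemma Min_between_le: "e \<in> between P a b \<Longrightarrow> Min (between P a b) \<le> e"
  using finite_between by simp

lemma Max_between_ge: "e \<in> between P a b \<Longrightarrow> e \<le> Max (between P a b)"
  using finite_between by simp

end

end

lemma between_commute: "between P a b = between P b a"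
  unfolding between_def by (simp add: min.commute max.commute)

lemma between_eq_image: "between xs a b = (!) xs ` {min (pos xs a) (pos xs b)..max (pos xs a) (pos xs b)}"
  unfolding between_def by auto

lemma k_profile_eq_imp_extrema_eq:
  assumes "k_profile n k P = k_profile n k Q" "a < b" "b \<le> a + k" "b \<le> n+1"
  shows "Min (between P a b) = Min (between Q a b) \<and> Max (between P a b) = Max (between Q a b)"
proof -
  have "(a, a + (b-a), Min (between P a (a + (b-a))), Max (between P a (a+(b-a)))) \<in> k_profile n k P"
    unfolding k_profile_def using assms by (intro CollectI exI[of _ a] exI[of _ "b-a"]) auto
  then have "(a, b, Min (between P a b), Max (between P a b)) \<in> k_profile n k Q"
    using assms by simp
  then show ?thesis unfolding k_profile_def by auto
qed

definition extrema_agree :: "nat \<Rightarrow> nat \<Rightarrow> nat list \<Rightarrow> nat list \<Rightarrow> bool" where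
  "extrema_agree n d P Q \<longleftrightarrow> (\<forall>a b. a \<le> n+1 \<longrightarrow> b \<le> n+1 \<longrightarrow> a \<noteq> b \<longrightarrow> a \<le> b + d \<longrightarrow> b \<le> a + d \<longrightarrow>
     Min (between P a b) = Min (between Q a b) \<and> Max (between P a b) = Max (between Q a b))"

lemma extrema_agree_commute: "extrema_agree n d P Q \<Longrightarrow> extrema_agree n d Q P"
  unfolding extrema_agree_def by metis

lemma extrema_agree_if_k_profile_eq:
  assumes "k_profile n k P = k_profile n k Q"
  shows "extrema_agree n k P Q"
  unfolding extrema_agree_def
proof (intro allI impI)
  fix a b assume ab: "a \<le> n+1" "b \<le> n+1" "a \<noteq> b" "a \<le> b + k" "b \<le> a + k"
  show "Min (between P a b) = Min (between Q a b) \<and> Max (between P a b) = Max (between Q a b)"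
  proof (cases "a < b")
    case True
    then show ?thesis using k_profile_eq_imp_extrema_eq[OF assms True ab(5,2)] by blast
  next
    case False
    then have "b < a" using ab(3) by simp
    then show ?thesis
      using k_profile_eq_imp_extrema_eq[OF assms _ ab(4,1)] by (simp add: between_commute)
  qed
qed

lemma extrema_agreeD:
  assumes "extrema_agree n d P Q" "a \<le> n+1" "b \<le> n+1" "a \<noteq> b" "a \<le> b + d" "b \<le> a + d"
  shows "Min (between P a b) = Min (between Q a b)" "Max (between P a b) = Max (between Q a b)"
  using assms unfolding extrema_agree_def by blast+

section \<open>Reconstruction from the profile of width n-3\<close>

lemma perms_first_difference:
  assumes P: "P \<in> perms n" and Q: "Q \<in> perms n" and "P \<noteq> Q"
  obtains j where "1 \<le> j" "j \<le> n" "\<forall>i<j. P!i = Q!i" "P!j \<noteq> Q!j"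
proof -
  have "\<exists>i. i < n+2 \<and> P!i \<noteq> Q!i"
    using assms(3) nth_equalityI[of P Q] permsD(3)[OF P] permsD(3)[OF Q] by auto
  then obtain j where j: "j < n+2" "P!j \<noteq> Q!j" and least: "\<forall>i<j. \<not> (i < n+2 \<and> P!i \<noteq> Q!i)"
    using exists_least_iff[of "\<lambda>i. i < n+2 \<and> P!i \<noteq> Q!i"] by blast
  have "j \<noteq> 0" "j \<noteq> n+1" using j(2) permsD(4,5)[OF P] permsD(4,5)[OF Q] by (metis, metis)
  then show thesis using that[of j] j least by auto
qed

lemma divergent_entry_in_window:
  assumes P: "P \<in> perms n" and Q: "Q \<in> perms n" and agree: "extrema_agree n d P Q"
    and j: "j \<le> n" "\<forall>i<j. P!i = Q!i" "P!j \<noteq> Q!j" and i: "i < j"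
    and close: "P!i \<le> P!j + d" "P!j \<le> P!i + d"
  obtains m1 m2 where "i \<le> m1" "m1 \<le> j" "i \<le> m2" "m2 \<le> j" "P!m1 \<le> Q!j" "Q!j \<le> P!m2"
proof -
  let ?a = "P!i" and ?x = "P!j" and ?y = "Q!j"
  have bnd: "?a \<le> n+1" "?x \<le> n+1" using perms_nth_le[OF P, of i] perms_nth_le[OF P, of j] j(1) i by auto
  have pos: "pos P ?a = i" "pos P ?x = j" "pos Q ?a = i" "pos Q ?y = j"
    using perms_pos_nth[OF P, of i] perms_pos_nth[OF P, of j] perms_pos_nth[OF Q, of i]
      perms_pos_nth[OF Q, of j] j i by auto
  have "?a \<noteq> ?x" using pos i by (metis less_irrefl)
  have x_late: "j < pos Q ?x"
  proof -
    have "Q!m \<noteq> ?x" if "m < j+1" for m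
    proof (cases "m = j")
      case False
      then have "m < j" using that by simp
      then show ?thesis using j(2) pos(2) perms_pos_nth[OF P, of m] j(1) by force
    qed (use j in simp)
    then show ?thesis using perms_pos_ge[OF Q bnd(2), of "j+1"] by simp
  qed
  have "?y \<in> between Q ?a ?x"
    using mem_between_iff[OF Q bnd, of ?y] perms_nth_le[OF Q, of j] j(1) pos x_late i by auto
  then have y: "Min (between Q ?a ?x) \<le> ?y" "?y \<le> Max (between Q ?a ?x)"
    using Min_between_le[OF Q bnd] Max_between_ge[OF Q bnd] by auto
  have extrema: "Min (between P ?a ?x) = Min (between Q ?a ?x)" "Max (between P ?a ?x) = Max (between Q ?a ?x)"
    using extrema_agreeD[OF agree bnd \<open>?a \<noteq> ?x\<close> close] by auto
  let ?m1 = "pos P (Min (between P ?a ?x))" and ?m2 = "pos P (Max (between P ?a ?x))"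
  have "i \<le> ?m1 \<and> ?m1 \<le> j \<and> P!?m1 = Min (between P ?a ?x)"
    using Min_between_mem[OF P bnd] mem_between_iff[OF P bnd] pos i perms_nth_pos[OF P] by auto
  moreover have "i \<le> ?m2 \<and> ?m2 \<le> j \<and> P!?m2 = Max (between P ?a ?x)"
    using Max_between_mem[OF P bnd] mem_between_iff[OF P bnd] pos i perms_nth_pos[OF P] by auto
  ultimately show thesis using that[of ?m1 ?m2] y extrema by auto
qed

locale agreeing_pair =
  fixes n :: nat and P Q :: "nat list"
  assumes P: "P \<in> perms n" and Q: "Q \<in> perms n"
    and agree: "extrema_agree n (n-3) P Q" and n: "5 \<le> n"
begin

lemma pair_swap: "agreeing_pair n Q P"
  using P Q extrema_agree_commute[OF agree] n by unfold_locales

lemma no_prefixes_0_1_n_vs_0_1_pred_n: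
  assumes "P!1 = 1" "Q!1 = 1" "P!2 = n" "Q!2 = n-1"
  shows False
proof -
  have P0: "P!0 = 0" "Q!0 = 0" using permsD(4) P Q by auto
  have pP: "pos P 1 = 1" "pos P n = 2" "pos P 0 = 0"
    using perms_pos_eq_iff[OF P] assms P0 n by auto
  have pQ: "pos Q 1 = 1" "pos Q (n-1) = 2" "pos Q 0 = 0"
    using perms_pos_eq_iff[OF Q] assms P0 n by auto
  have lt3: "i < 3 \<Longrightarrow> i = 0 \<or> i = 1 \<or> i = 2" for i :: nat by auto
  have P2: "3 \<le> pos P 2" using perms_pos_ge[OF P, of 2 3] lt3 P0 assms n by fastforce
  have Q2: "3 \<le> pos Q 2" using perms_pos_ge[OF Q, of 2 3] lt3 P0 assms n by fastforce
  have Pn1: "3 \<le> pos P (n-1)" using perms_pos_ge[OF P, of "n-1" 3] lt3 P0 assms n by fastforce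
  have Qn: "3 \<le> pos Q n" using perms_pos_ge[OF Q, of n 3] lt3 P0 assms n by fastforce
  have b: "pos P 2 \<le> n" "pos Q 2 \<le> n" "pos P (n-1) \<le> n" "pos Q n \<le> n"
    using perms_pos_le_n[OF P] perms_pos_le_n[OF Q] n by auto
  have e1: "Max (between P 0 2) = Max (between Q 0 2)"
    using extrema_agreeD(2)[OF agree, of 0 2] n by simp
  have e2: "Max (between P (n-1) 2) = Max (between Q (n-1) 2)"
    using extrema_agreeD(2)[OF agree, of "n-1" 2] n by simp
  have "n \<in> between P 0 2" using mem_between_iff[OF P, of 0 2 n] pP P2 n by auto
  then have m1: "n \<le> Max (between P 0 2)" using Max_between_ge[OF P] n by simp
  show False
  proof (cases "pos Q 2 < pos Q n")
    case True
    let ?m = "Max (between Q 0 2)"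
    have "?m \<in> between Q 0 2" using Max_between_mem[OF Q] n by simp
    then have mm: "?m \<le> n+1" "pos Q ?m \<le> pos Q 2" using mem_between_iff[OF Q, of 0 2] pQ n by auto
    then have "?m \<noteq> n" "?m \<noteq> n+1" using True perms_pos_Suc_n[OF Q] b by auto
    then show False using mm m1 e1 by simp
  next
    case False
    then have "n \<in> between Q (n-1) 2" using mem_between_iff[OF Q, of "n-1" 2 n] pQ Q2 Qn n by auto
    then have m2: "n \<le> Max (between Q (n-1) 2)" using Max_between_ge[OF Q] n by simp
    let ?m = "Max (between P (n-1) 2)"
    have "?m \<in> between P (n-1) 2" using Max_between_mem[OF P] n by simp
    then have mm: "?m \<le> n+1" "min (pos P (n-1)) (pos P 2) \<le> pos P ?m"
        "pos P ?m \<le> max (pos P (n-1)) (pos P 2)"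
      using mem_between_iff[OF P, of "n-1" 2] n by auto
    then have "?m \<noteq> n" "?m \<noteq> n+1" using P2 Pn1 pP perms_pos_Suc_n[OF P] b by auto
    then show False using mm m2 e2 by simp
  qed
qed

lemma no_prefixes_0_n_1_vs_0_n_2:
  assumes "P!1 = n" "Q!1 = n" "P!2 = 1" "Q!2 = 2"
  shows False
proof -
  have P0: "P!0 = 0" "Q!0 = 0" using permsD(4) P Q by auto
  have pP: "pos P n = 1" "pos P 1 = 2" "pos P 0 = 0"
    using perms_pos_eq_iff[OF P] assms P0 n by auto
  have pQ: "pos Q n = 1" "pos Q 2 = 2" "pos Q 0 = 0"
    using perms_pos_eq_iff[OF Q] assms P0 n by auto
  have lt3: "i < 3 \<Longrightarrow> i = 0 \<or> i = 1 \<or> i = 2" for i :: nat by auto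
  have P4: "3 \<le> pos P 4" using perms_pos_ge[OF P, of 4 3] lt3 P0 assms n by fastforce
  have P2: "3 \<le> pos P 2" using perms_pos_ge[OF P, of 2 3] lt3 P0 assms n by fastforce
  have Q1: "3 \<le> pos Q 1" using perms_pos_ge[OF Q, of 1 3] lt3 P0 assms n by fastforce
  have P4b: "pos P 4 \<le> n+1" using perms_pos_le[OF P] n by auto
  have Q4b: "pos Q 4 \<le> n+1" "pos Q 1 \<le> n+1" using perms_pos_le[OF Q] n by auto
  have late_large: "v \<le> n+1 \<Longrightarrow> 3 \<le> pos P v \<Longrightarrow> 2 \<le> v" for v
    using pP by (cases "v \<le> 1") (auto simp: le_Suc_eq)
  have m1: "2 \<le> Min (between P 4 (n+1))"
  proof -
    let ?m = "Min (between P 4 (n+1))"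
    have "?m \<in> between P 4 (n+1)" using Min_between_mem[OF P] n by simp
    then have "?m \<le> n+1" "pos P 4 \<le> pos P ?m"
      using mem_between_iff[OF P, of 4 "n+1"] n perms_pos_Suc_n[OF P] P4b by auto
    then show ?thesis using late_large P4 by auto
  qed
  have e1: "Min (between P 4 (n+1)) = Min (between Q 4 (n+1))"
    using extrema_agreeD(1)[OF agree, of 4 "n+1"] n by simp
  have e2: "Min (between P 2 4) = Min (between Q 2 4)"
    using extrema_agreeD(1)[OF agree, of 2 4] n by simp
  show False
  proof (cases "pos Q 4 < pos Q 1")
    case True
    then have "1 \<in> between Q 4 (n+1)"
      using mem_between_iff[OF Q, of 4 "n+1" 1] n perms_pos_Suc_n[OF Q] Q4b by auto
    then have "Min (between Q 4 (n+1)) \<le> 1" using Min_between_le[OF Q] n by simp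
    then show False using m1 e1 by simp
  next
    case False
    then have "1 \<in> between Q 2 4" using mem_between_iff[OF Q, of 2 4 1] n pQ Q1 by auto
    then have "Min (between Q 2 4) \<le> 1" using Min_between_le[OF Q] n by simp
    moreover have "2 \<le> Min (between P 2 4)"
    proof -
      let ?m = "Min (between P 2 4)"
      have "?m \<in> between P 2 4" using Min_between_mem[OF P] n by simp
      then have "?m \<le> n+1" "min (pos P 2) (pos P 4) \<le> pos P ?m"
        using mem_between_iff[OF P, of 2 4] n by auto
      then show ?thesis using late_large P4 P2 by auto
    qed
    ultimately show False using e2 by simp
  qed
qed

end

locale top_second_entries = agreeing_pair +
  fixes x y :: nat
  assumes second: "P!1 = x" "Q!1 = y" and top: "n-2 \<le> x" "x < y" "y \<le> n"
begin

lemma pos_second_P: "pos P x = 1" and pos_second_Q: "pos Q y = 1"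
  using perms_pos_eq_iff[OF P] perms_pos_eq_iff[OF Q] second top n by auto

lemma pos_late: "2 \<le> pos P 2" "2 \<le> pos Q 2" "2 \<le> pos Q x" "2 \<le> pos P y"
proof -
  have lt2: "i < 2 \<Longrightarrow> i = 0 \<or> i = 1" for i :: nat by auto
  note P0 = permsD(4)[OF P] permsD(4)[OF Q]
  show "2 \<le> pos P 2" using perms_pos_ge[OF P, of 2 2] lt2 P0 second top n by fastforce
  show "2 \<le> pos Q 2" using perms_pos_ge[OF Q, of 2 2] lt2 P0 second top n by fastforce
  show "2 \<le> pos Q x" using perms_pos_ge[OF Q, of x 2] lt2 P0 second top n by fastforce
  show "2 \<le> pos P y" using perms_pos_ge[OF P, of y 2] lt2 P0 second top n by fastforce
qed

lemma pos_bounds: "pos P 2 \<le> n" "pos Q 2 \<le> n" "pos Q x \<le> n" "pos P y \<le> n" "pos P n \<le> n" "pos Q n \<le> n"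
  using perms_pos_le_n[OF P] perms_pos_le_n[OF Q] n top by auto

lemma y_ne_n: "y \<noteq> n"
proof
  assume yn: "y = n"
  note pP = pos_second_P perms_pos_0[OF P] perms_pos_Suc_n[OF P]
    and pQ = pos_second_Q perms_pos_0[OF Q] perms_pos_Suc_n[OF Q]
    and Q2 = pos_late(2)
    and Qx = pos_late(3)
    and b = pos_bounds(1-4)
    and xy = top
  have e02: "Max (between P 0 2) = Max (between Q 0 2)"
    using extrema_agreeD(2)[OF agree, of 0 2] n by simp
  have "n \<in> between Q 0 2" using mem_between_iff[OF Q, of 0 2 n] pQ Q2 n yn by auto
  then have "n \<le> Max (between Q 0 2)" using Max_between_ge[OF Q] n by simp
  then have v1: "n \<le> Max (between P 0 2)" using e02 by simp
  let ?v = "Max (between P 0 2)"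
  have "?v \<in> between P 0 2" using Max_between_mem[OF P] n by simp
  then have vv: "?v \<le> n+1" "pos P ?v \<le> pos P 2" using mem_between_iff[OF P, of 0 2] pP n by auto
  then have "?v \<noteq> n+1" using b pP by auto
  then have "?v = n" using vv v1 by simp
  then have pn: "pos P n \<le> pos P 2" using vv by simp
  have "pos P n \<noteq> 0" using pP perms_pos_inj[OF P, of n 0] n by auto
  then have "n \<in> between P x 2" using mem_between_iff[OF P, of x 2 n] pP pn xy n by auto
  then have "n \<le> Max (between P x 2)" using Max_between_ge[OF P] n xy by simp
  moreover have "Max (between P x 2) = Max (between Q x 2)" using extrema_agreeD(2)[OF agree, of x 2] n xy yn by simp
  moreover
  let ?w = "Max (between Q x 2)"
  have "?w \<in> between Q x 2" using Max_between_mem[OF Q] n xy by simp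
  then have ww: "?w \<le> n+1" "min (pos Q x) (pos Q 2) \<le> pos Q ?w" "pos Q ?w \<le> max (pos Q x) (pos Q 2)"
    using mem_between_iff[OF Q, of x 2] n xy by auto
  then have "?w \<noteq> n" "?w \<noteq> n+1" using Qx Q2 pQ yn b by auto
  ultimately show False using ww by simp
qed

lemma n_before_2_if_y_n_minus_1:
  assumes "y = n-1"
  shows "pos Q x < pos Q n" "pos Q n \<le> pos Q 2" "pos P n \<le> pos P 2"
proof -
  have yx: "y = n-1" "x = n-2" using assms top by auto
  note pP = pos_second_P perms_pos_0[OF P] perms_pos_Suc_n[OF P]
    and pQ = pos_second_Q perms_pos_0[OF Q] perms_pos_Suc_n[OF Q]
    and P2 = pos_late(1)
    and Q2 = pos_late(2)
    and Qx = pos_late(3)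
    and b = pos_bounds(1-4)
    and xy = top
  have e02: "Max (between P 0 2) = Max (between Q 0 2)"
    using extrema_agreeD(2)[OF agree, of 0 2] n by simp
  let ?a = "Max (between Q 0 2)"
  have "y \<in> between Q 0 2" using mem_between_iff[OF Q, of 0 2 y] pQ Q2 n xy by auto
  then have a1: "y \<le> ?a" using Max_between_ge[OF Q] n by simp
  have "Max (between P 0 2) \<in> between P 0 2" using Max_between_mem[OF P] n by simp
  then have "?a \<in> between P 0 2" using e02 by simp
  then have aa: "?a \<le> n+1" "pos P ?a \<le> pos P 2" using mem_between_iff[OF P, of 0 2] pP n by auto
  have "pos P ?a \<noteq> 0" using pP perms_pos_inj[OF P, of ?a 0] a1 aa xy by auto
  then have "?a \<in> between P x 2" using mem_between_iff[OF P, of x 2 ?a] pP aa xy n by auto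
  then have ax1: "?a \<le> Max (between P x 2)" using Max_between_ge[OF P] n xy by simp
  have ax2: "Max (between P x 2) \<le> ?a"
  proof -
    have "Max (between P x 2) \<in> between P x 2" using Max_between_mem[OF P] n xy by simp
    then have "Max (between P x 2) \<in> between P 0 2" using mem_between_iff[OF P, of x 2] mem_between_iff[OF P, of 0 2] pP P2 n xy by auto
    then have "Max (between P x 2) \<le> Max (between P 0 2)" using Max_between_ge[OF P, of 0 2] n by simp
    then show ?thesis using e02 by simp
  qed
  have exq: "Max (between P x 2) = Max (between Q x 2)" using extrema_agreeD(2)[OF agree, of x 2] n yx by simp
  let ?w = "Max (between Q x 2)"
  have wa: "?w = ?a" using ax1 ax2 exq by simp
  have "?w \<in> between Q x 2" using Max_between_mem[OF Q] n xy by simp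
  then have ww: "?w \<le> n+1" "min (pos Q x) (pos Q 2) \<le> pos Q ?w" "pos Q ?w \<le> max (pos Q x) (pos Q 2)"
    using mem_between_iff[OF Q, of x 2] n xy by auto
  then have "?w \<noteq> y" "?w \<noteq> n+1" using Qx Q2 pQ b by auto
  then have wn: "?w = n" using ww wa a1 yx by simp
  have "?a \<in> between Q 0 2" using Max_between_mem[OF Q] n by simp
  then have qn2: "pos Q n \<le> pos Q 2" using mem_between_iff[OF Q, of 0 2] pQ n wn wa by auto
  have "pos Q n \<noteq> pos Q 2" using perms_pos_inj[OF Q, of n 2] n by auto
  moreover have "pos Q n \<noteq> pos Q x"
  proof
    assume "pos Q n = pos Q x"
    then have "n = x" using perms_pos_inj[OF Q, of n x] xy by simp
    then show False using yx n by simp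
  qed
  ultimately have qxn: "pos Q x < pos Q n" using ww wn qn2 by (auto simp: min_def max_def split: if_splits)
  then show "pos Q x < pos Q n" "pos Q n \<le> pos Q 2" "pos P n \<le> pos P 2" using qn2 aa wa wn by simp_all
qed

lemma y_before_n_if_y_n_minus_1:
  assumes "y = n-1"
  shows "pos P y < pos P n"
proof -
  have yx: "y = n-1" "x = n-2" using assms top by auto
  note pP = pos_second_P perms_pos_0[OF P] perms_pos_Suc_n[OF P]
    and pQ = pos_second_Q perms_pos_0[OF Q] perms_pos_Suc_n[OF Q]
    and Q2 = pos_late(2)
    and b = pos_bounds(1-4)
    and xy = top
  note n_front = n_before_2_if_y_n_minus_1[OF assms]
  have qn2: "pos Q n \<le> pos Q 2" and pn2: "pos P n \<le> pos P 2" using n_front by simp_all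
  have "n \<in> between Q y 2" using mem_between_iff[OF Q, of y 2 n] pQ qn2 Q2 n xy perms_pos_gt_0[OF Q, of n] by auto
  then have "n \<le> Max (between Q y 2)" using Max_between_ge[OF Q] n xy by simp
  moreover have "Max (between P y 2) = Max (between Q y 2)" using extrema_agreeD(2)[OF agree, of y 2] n yx by simp
  ultimately have c1: "n \<le> Max (between P y 2)" by simp
  let ?c = "Max (between P y 2)"
  have "?c \<in> between P y 2" using Max_between_mem[OF P] n xy by simp
  then have cc: "?c \<le> n+1" "min (pos P y) (pos P 2) \<le> pos P ?c" "pos P ?c \<le> max (pos P y) (pos P 2)"
    using mem_between_iff[OF P, of y 2] n xy by auto
  then have "?c \<noteq> n+1" using pP b by auto
  then have cn: "?c = n" using cc c1 by simp
  have "pos P n \<noteq> pos P 2" using perms_pos_inj[OF P, of n 2] n by auto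
  moreover have "pos P n \<noteq> pos P y"
  proof
    assume "pos P n = pos P y"
    then have "n = y" using perms_pos_inj[OF P, of n y] xy by simp
    then show False using yx n by simp
  qed
  ultimately have pyn: "pos P y < pos P n" using cc cn pn2 by (auto simp: min_def max_def split: if_splits)
  then show ?thesis .
qed

lemma y_ne_n_minus_1: "y \<noteq> n-1"
proof
  assume y: "y = n-1"
  then have yx: "y = n-1" "x = n-2" using top by auto
  note pP = pos_second_P perms_pos_0[OF P] perms_pos_Suc_n[OF P]
    and pQ = pos_second_Q perms_pos_0[OF Q] perms_pos_Suc_n[OF Q]
    and Qx = pos_late(3)
    and Py = pos_late(4)
    and b = pos_bounds(1-4)
    and pPn = pos_bounds(5,6)
    and xy = top
    and p1 = second
  have P0: "P!0 = 0" "Q!0 = 0" using permsD(4) P Q by auto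
  have lt2: "i < 2 \<Longrightarrow> i = 0 \<or> i = 1" for i :: nat by auto
  have qxn: "pos Q x < pos Q n"
    using n_before_2_if_y_n_minus_1[OF y] by simp
  have pyn: "pos P y < pos P n" using y_before_n_if_y_n_minus_1[OF y] .
  have "x \<in> between Q y n" using mem_between_iff[OF Q, of y n x] pQ qxn n xy Qx by auto
  then have "Min (between Q y n) \<le> x" using Min_between_le[OF Q] n xy by simp
  moreover have "Min (between P y n) = Min (between Q y n)" using extrema_agreeD(1)[OF agree, of y n] n yx by simp
  ultimately have e0: "Min (between P y n) \<le> x" by simp
  let ?e = "Min (between P y n)"
  have "?e \<in> between P y n" using Min_between_mem[OF P] n xy by simp
  then have ee: "?e \<le> n+1" "pos P y \<le> pos P ?e" "pos P ?e \<le> pos P n"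
    using mem_between_iff[OF P, of y n] n xy pyn by auto
  have "?e \<noteq> x" using ee pP Py by auto
  moreover have "?e \<noteq> 0"
  proof
    assume "?e = 0" then have "pos P ?e = 0" using pP by simp
    then show False using ee Py by simp
  qed
  ultimately have e13: "1 \<le> ?e" "?e \<le> n-3" using e0 yx by auto
  have "pos P ?e \<noteq> pos P n"
  proof
    assume "pos P ?e = pos P n"
    moreover have "?e \<le> n+1" using e13 by simp
    ultimately have "?e = n" using perms_pos_inj[OF P, of ?e n] by simp
    then show False using e13 n by simp
  qed
  then have pen: "pos P ?e < pos P n" using ee by simp
  have "y \<in> between P x ?e" using mem_between_iff[OF P, of x ?e y] pP ee e13 n xy Py by auto
  then have "y \<le> Max (between P x ?e)" using Max_between_ge[OF P] n e13 xy by simp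
  moreover
  let ?m = "Max (between P x ?e)"
  have "?m \<in> between P x ?e" using Max_between_mem[OF P] n e13 xy by simp
  then have mm: "?m \<le> n+1" "pos P ?m \<le> pos P ?e"
    using mem_between_iff[OF P, of x ?e] n e13 xy pP ee Py by auto
  then have "?m \<noteq> n" "?m \<noteq> n+1" using pen pP b ee pPn by auto
  ultimately have mv: "?m = y" using mm yx by linarith
  have "Max (between P x ?e) = Max (between Q x ?e)" using extrema_agreeD(2)[OF agree, of x ?e] n yx e13 by simp
  then have mq: "Max (between Q x ?e) = y" using mv by simp
  have "Max (between Q x ?e) \<in> between Q x ?e" using Max_between_mem[OF Q] n e13 xy by simp
  then have "min (pos Q x) (pos Q ?e) \<le> pos Q y" using mem_between_iff[OF Q, of x ?e] n e13 xy mq by auto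
  moreover have "2 \<le> pos Q ?e" using perms_pos_ge[OF Q, of ?e 2] lt2 P0 p1 e13 yx n by fastforce
  ultimately show False using Qx pQ by simp
qed

end

text \<open>The entries \<open>P!(j-1)\<close>, \<open>P!j\<close> and \<open>Q!j\<close> play the roles of \<open>s\<close>, \<open>x\<close> and \<open>y\<close> above.\<close>

locale first_divergence = agreeing_pair +
  fixes j :: nat
  assumes j: "1 \<le> j" "j \<le> n" and prefix: "\<forall>i<j. P!i = Q!i" and diverge: "P!j \<noteq> Q!j"
begin

lemma divergence_swap: "first_divergence n Q P j"
  using pair_swap j prefix diverge
  by (simp add: first_divergence_def first_divergence_axioms_def)

lemma predecessor_eq: "Q!(j-1) = P!(j-1)"
  using prefix j by simp

lemma divergence_values:
  "P!(j-1) \<le> n" "P!j \<le> n" "Q!j \<le> n" "P!j \<noteq> 0" "Q!j \<noteq> 0" "P!(j-1) \<noteq> P!j" "P!(j-1) \<noteq> Q!j"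
proof -
  have len: "length P = n+2" "length Q = n+2" using permsD(3) P Q by auto
  note P_inj = nth_eq_iff_index_eq[OF permsD(1)[OF P]] and Q_inj = nth_eq_iff_index_eq[OF permsD(1)[OF Q]]
  have "P!(j-1) \<noteq> n+1" "P!j \<noteq> n+1" "Q!j \<noteq> n+1"
    using P_inj[of _ "n+1"] Q_inj[of j "n+1"] permsD(5)[OF P] permsD(5)[OF Q] len j by auto
  moreover have "j-1 \<le> n+1" "j \<le> n+1" using j by auto
  ultimately show "P!(j-1) \<le> n" "P!j \<le> n" "Q!j \<le> n"
    using perms_nth_le[OF P] perms_nth_le[OF Q] by (metis le_Suc_eq Suc_eq_plus1)+
  show "P!j \<noteq> 0" "Q!j \<noteq> 0"
    using P_inj[of j 0] Q_inj[of j 0] permsD(4)[OF P] permsD(4)[OF Q] len j by auto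
  show "P!(j-1) \<noteq> P!j" using P_inj[of "j-1" j] len j by auto
  show "P!(j-1) \<noteq> Q!j" using Q_inj[of "j-1" j] predecessor_eq len j by auto
qed

lemma second_predecessor_values:
  assumes "3 \<le> j"
  shows "Q!(j-2) = P!(j-2)" "P!(j-2) \<le> n" "P!(j-2) \<notin> {0, P!(j-1), P!j, Q!j}"
proof -
  have len: "length P = n+2" "length Q = n+2" using permsD(3) P Q by auto
  note P_inj = nth_eq_iff_index_eq[OF permsD(1)[OF P]] and Q_inj = nth_eq_iff_index_eq[OF permsD(1)[OF Q]]
  show eq: "Q!(j-2) = P!(j-2)" using prefix assms by simp
  have "P!(j-2) \<noteq> n+1" using P_inj[of "j-2" "n+1"] permsD(5)[OF P] len j by auto
  moreover have "j-2 \<le> n+1" using j by auto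
  ultimately show "P!(j-2) \<le> n" using perms_nth_le[OF P] by (metis le_Suc_eq Suc_eq_plus1)
  show "P!(j-2) \<notin> {0, P!(j-1), P!j, Q!j}"
    using P_inj[of "j-2" 0] P_inj[of "j-2" "j-1"] P_inj[of "j-2" j] Q_inj[of "j-2" j] eq
      permsD(4)[OF P] len j assms by auto
qed

lemma divergent_entry_within_last_two:
  assumes "P!(j-1) \<le> P!j + (n-3)" "P!j \<le> P!(j-1) + (n-3)"
  shows "min (P!(j-1)) (P!j) \<le> Q!j \<and> Q!j \<le> max (P!(j-1)) (P!j)"
proof -
  obtain m1 m2 where m: "j-1 \<le> m1" "m1 \<le> j" "j-1 \<le> m2" "m2 \<le> j" "P!m1 \<le> Q!j" "Q!j \<le> P!m2"
    using divergent_entry_in_window[OF P Q agree j(2) prefix diverge, of "j-1"] assms j(1) by auto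
  have "m = j-1 \<or> m = j" if "j-1 \<le> m" "m \<le> j" for m using that by arith
  then have "P!m1 \<in> {P!(j-1), P!j}" "P!m2 \<in> {P!(j-1), P!j}" using m by auto
  then show ?thesis using m(5,6) by (auto simp: min_le_iff_disj le_max_iff_disj)
qed

lemma divergent_entry_within_last_three:
  assumes "2 \<le> j" "P!(j-2) \<le> P!j + (n-3)" "P!j \<le> P!(j-2) + (n-3)"
  shows "min (P!(j-2)) (min (P!(j-1)) (P!j)) \<le> Q!j \<and> Q!j \<le> max (P!(j-2)) (max (P!(j-1)) (P!j))"
proof -
  obtain m1 m2 where m: "j-2 \<le> m1" "m1 \<le> j" "j-2 \<le> m2" "m2 \<le> j" "P!m1 \<le> Q!j" "Q!j \<le> P!m2"
    using divergent_entry_in_window[OF P Q agree j(2) prefix diverge, of "j-2"] assms by auto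
  have "m = j-2 \<or> m = j-1 \<or> m = j" if "j-2 \<le> m" "m \<le> j" for m using that by arith
  then have "P!m1 \<in> {P!(j-2), P!(j-1), P!j}" "P!m2 \<in> {P!(j-2), P!(j-1), P!j}" using m by auto
  then show ?thesis using m(5,6) by (auto simp: min_le_iff_disj le_max_iff_disj)
qed

lemma far_below_spreads:
  assumes far: "P!(j-1) + (n-3) < P!j"
  shows "P!(j-1) + (n-3) < Q!j"
proof (rule ccontr)
  assume near: "\<not> ?thesis"
  then have "Q!(j-1) \<le> Q!j + (n-3)" "Q!j \<le> Q!(j-1) + (n-3)"
    using far divergence_values(2) predecessor_eq n by auto
  then have "P!j \<le> max (P!(j-1)) (Q!j)"
    using first_divergence.divergent_entry_within_last_two[OF divergence_swap] predecessor_eq by simp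
  then show False using far near by (simp add: le_max_iff_disj)
qed

lemma far_above_spreads:
  assumes far: "P!j + (n-3) < P!(j-1)"
  shows "Q!j + (n-3) < P!(j-1)"
proof (rule ccontr)
  assume near: "\<not> ?thesis"
  then have "Q!(j-1) \<le> Q!j + (n-3)" "Q!j \<le> Q!(j-1) + (n-3)"
    using far divergence_values(3) predecessor_eq n by auto
  then have "min (P!(j-1)) (Q!j) \<le> P!j"
    using first_divergence.divergent_entry_within_last_two[OF divergence_swap] predecessor_eq by simp
  then show False using far near by (simp add: min_le_iff_disj)
qed

lemma far_below_ordered:
  assumes far: "P!(j-1) + (n-3) < P!j" "P!(j-1) + (n-3) < Q!j" and lt: "P!j < Q!j"
  shows False
proof -
  have "P!(j-1) \<le> 1" using far lt divergence_values(3) n by linarith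
  then consider "P!(j-1) = 0" | "P!(j-1) = 1" by linarith
  then show False
  proof cases
    case 1
    then have "pos P (P!(j-1)) = pos P 0" by simp
    then have "j = 1" using perms_pos_nth[OF P, of "j-1"] perms_pos_0[OF P] j by simp
    then have second: "P!1 = P!j" "Q!1 = Q!j" by simp_all
    have top: "n-2 \<le> P!1" "P!1 < Q!1" "Q!1 \<le> n"
      using far lt divergence_values(3) 1 second n by linarith+
    interpret top_second_entries n P Q "P!1" "Q!1"
      using agreeing_pair_axioms top by (simp add: top_second_entries_def top_second_entries_axioms_def)
    have "Q!1 = n \<or> Q!1 = n-1" using top n by linarith
    then show False using y_ne_n y_ne_n_minus_1 by blast
  next
    case s1: 2
    have xy: "P!j = n-1" "Q!j = n" using far lt divergence_values(3) s1 n by linarith+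
    have "j \<noteq> 1" using s1 permsD(4)[OF P] by auto
    then consider "j = 2" | "3 \<le> j" using j by linarith
    then show False
    proof cases
      case 1
      then show False
        using agreeing_pair.no_prefixes_0_1_n_vs_0_1_pred_n[OF pair_swap] xy s1 predecessor_eq by simp
    next
      case 2
      then have "P!(j-2) \<le> n" "P!(j-2) \<notin> {0, 1, n-1, n}"
        using second_predecessor_values[OF 2] xy s1 by auto
      then have t: "2 \<le> P!(j-2)" "P!(j-2) \<le> n-2" by auto
      then have "P!(j-2) \<le> P!j + (n-3)" "P!j \<le> P!(j-2) + (n-3)" using xy n by linarith+
      then have "Q!j \<le> max (P!(j-2)) (max (P!(j-1)) (P!j))" using divergent_entry_within_last_three 2 by simp
      then show False using t xy s1 n by (auto simp: le_max_iff_disj)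
    qed
  qed
qed

lemma far_above_ordered:
  assumes far: "P!j + (n-3) < P!(j-1)" "Q!j + (n-3) < P!(j-1)" and lt: "P!j < Q!j"
  shows False
proof -
  have entries: "P!j = 1" "Q!j = 2" "P!(j-1) = n"
    using far lt divergence_values(1,4) n by linarith+
  have "j \<noteq> 1" using entries permsD(4)[OF P] n by auto
  then consider "j = 2" | "3 \<le> j" using j by linarith
  then show False
  proof cases
    case 1
    then show False using no_prefixes_0_n_1_vs_0_n_2 entries predecessor_eq by simp
  next
    case 2
    then have "P!(j-2) \<le> n" "P!(j-2) \<notin> {0, 1, 2, n}" "Q!(j-2) = P!(j-2)"
      using second_predecessor_values[OF 2] entries by auto
    then have t: "3 \<le> Q!(j-2)" "Q!(j-2) \<le> n-1" by auto
    then have "Q!(j-2) \<le> Q!j + (n-3)" "Q!j \<le> Q!(j-2) + (n-3)" using entries n by linarith+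
    then have "min (Q!(j-2)) (min (Q!(j-1)) (Q!j)) \<le> P!j"
      using first_divergence.divergent_entry_within_last_three[OF divergence_swap] 2 by simp
    then show False using t entries predecessor_eq n by (auto simp: min_le_iff_disj)
  qed
qed

lemma predecessor_near:
  "P!(j-1) \<le> P!j + (n-3)" "P!j \<le> P!(j-1) + (n-3)"
proof -
  have order: "Q!j < P!j" if "\<not> P!j < Q!j" using that diverge by simp
  have "\<not> P!(j-1) + (n-3) < P!j"
  proof
    assume far: "P!(j-1) + (n-3) < P!j"
    note far' = far_below_spreads[OF far]
    show False
    proof (cases "P!j < Q!j")
      case False
      then show False using first_divergence.far_below_ordered[OF divergence_swap] order far far'
        predecessor_eq by simp
    qed (use far_below_ordered far far' in blast)
  qed
  moreover have "\<not> P!j + (n-3) < P!(j-1)"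
  proof
    assume far: "P!j + (n-3) < P!(j-1)"
    note far' = far_above_spreads[OF far]
    show False
    proof (cases "P!j < Q!j")
      case False
      then show False using first_divergence.far_above_ordered[OF divergence_swap] order far far'
        predecessor_eq by simp
    qed (use far_above_ordered far far' in blast)
  qed
  ultimately show "P!(j-1) \<le> P!j + (n-3)" "P!j \<le> P!(j-1) + (n-3)" by simp_all
qed

theorem inconsistent: False
proof -
  have "min (P!(j-1)) (P!j) \<le> Q!j \<and> Q!j \<le> max (P!(j-1)) (P!j)"
    using divergent_entry_within_last_two predecessor_near by simp
  moreover have "min (P!(j-1)) (Q!j) \<le> P!j \<and> P!j \<le> max (P!(j-1)) (Q!j)"
    using first_divergence.divergent_entry_within_last_two[OF divergence_swap]
      first_divergence.predecessor_near[OF divergence_swap] predecessor_eq by simp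
  ultimately show False
    using divergence_values(6,7) diverge by (auto simp: min_le_iff_disj le_max_iff_disj)
qed

end

lemma (in agreeing_pair) eq: "P = Q"
proof (rule ccontr)
  assume "P \<noteq> Q"
  then obtain j where "1 \<le> j" "j \<le> n" "\<forall>i<j. P!i = Q!i" "P!j \<noteq> Q!j"
    using perms_first_difference[OF P Q] by blast
  then interpret first_divergence n P Q j
    using agreeing_pair_axioms by (simp add: first_divergence_def first_divergence_axioms_def)
  show False by (rule inconsistent)
qed

theorem reconstructing_n_minus_3:
  assumes "5 \<le> n"
  shows "reconstructing n (n-3)"
  unfolding reconstructing_def
proof (intro ballI impI)
  fix P Q assume "P \<in> perms n" "Q \<in> perms n" "k_profile n (n-3) P = k_profile n (n-3) Q"
  then interpret agreeing_pair n P Q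
    using extrema_agree_if_k_profile_eq assms by unfold_locales
  show "P = Q" by (rule eq)
qed

section \<open>Small permutations\<close>

fun index_of :: "'a list \<Rightarrow> 'a \<Rightarrow> nat" where
  "index_of [] a = 0"
| "index_of (x # xs) a = (if x = a then 0 else Suc (index_of xs a))"

lemma index_of_less_length_nth: "a \<in> set xs \<Longrightarrow> index_of xs a < length xs \<and> xs ! index_of xs a = a"
  by (induction xs) auto

lemma pos_eq_index_of: "distinct xs \<Longrightarrow> a \<in> set xs \<Longrightarrow> pos xs a = index_of xs a"
  using index_of_less_length_nth[of a xs] pos_nth[of xs "index_of xs a"] by simp

definition segment :: "nat list \<Rightarrow> nat \<Rightarrow> nat \<Rightarrow> nat list" where
  "segment xs a b =
     map ((!) xs) [min (index_of xs a) (index_of xs b) ..< Suc (max (index_of xs a) (index_of xs b))]"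

lemma between_eq_set_segment:
  assumes "distinct xs" "a \<in> set xs" "b \<in> set xs"
  shows "between xs a b = set (segment xs a b)"
  unfolding between_eq_image segment_def pos_eq_index_of[OF assms(1,2)] pos_eq_index_of[OF assms(1,3)]
  by (simp only: set_map set_upt atLeastLessThanSuc_atLeastAtMost)

definition extrema_list :: "nat \<Rightarrow> nat \<Rightarrow> nat list \<Rightarrow> (nat \<times> nat) list" where
  "extrema_list n k xs = [(Min (set (segment xs t (t+i))), Max (set (segment xs t (t+i)))).
     i \<leftarrow> [1..<k+1], t \<leftarrow> [0..<n+2-i]]"

lemma extrema_list_eq_if_k_profile_eq:
  assumes P: "P \<in> perms n" and Q: "Q \<in> perms n" and "k_profile n k P = k_profile n k Q"
  shows "extrema_list n k P = extrema_list n k Q"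
proof -
  have segment_eq: "between R t (t+i) = set (segment R t (t+i))"
    if "R \<in> perms n" "t + i \<le> n+1" for R t i
    using between_eq_set_segment permsD(1,2)[OF that(1)] that(2) by simp
  have extrema_eq: "(Min (set (segment P t (t+i))), Max (set (segment P t (t+i)))) =
      (Min (set (segment Q t (t+i))), Max (set (segment Q t (t+i))))"
    if "1 \<le> i" "i \<le> k" "t + i \<le> n+1" for t i
    using k_profile_eq_imp_extrema_eq[OF assms(3), of t "t+i"] segment_eq[OF P] segment_eq[OF Q] that
    by simp
  show ?thesis unfolding extrema_list_def
    by (intro arg_cong[where f = concat] map_cong refl) (use extrema_eq in auto)
qed

lemma perms_eq_Cons_append:
  assumes "P \<in> perms n"
  shows "P = 0 # butlast (tl P) @ [n+1]"
proof -
  have len: "length (tl P) = n+1" using permsD(3)[OF assms] by simp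
  then have "P \<noteq> []" by auto
  have "tl P \<noteq> []"
  proof
    assume "tl P = []"
    then show False using len by simp
  qed
  have "last (tl P) = n+1" using last_tl[of P] \<open>tl P \<noteq> []\<close> assms by (simp add: perms_def)
  then have "tl P = butlast (tl P) @ [n+1]" using append_butlast_last_id[OF \<open>tl P \<noteq> []\<close>] by simp
  moreover have "P = 0 # tl P" using \<open>P \<noteq> []\<close> permsD(4)[OF assms] by (cases P) auto
  ultimately show ?thesis by simp
qed

lemma perms_in_permutations_list:
  assumes "0 # M @ [n+1] \<in> perms n"
  shows "M \<in> set (permutations_of_set_list [1..<n+1])"
proof -
  have dM: "distinct M" "0 \<notin> set M" "n+1 \<notin> set M" using permsD(1)[OF assms] by simp_all
  have sP: "insert 0 (insert (n+1) (set M)) = {0..n+1}" using permsD(2)[OF assms] by simp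
  have "set M = {1..n}"
  proof
    show "set M \<subseteq> {1..n}"
    proof
      fix v assume v: "v \<in> set M"
      then have "v \<in> insert 0 (insert (n+1) (set M))" by simp
      then have "v \<le> n+1" unfolding sP by simp
      moreover have "v \<noteq> 0" using v dM(2) by metis
      moreover have "v \<noteq> n+1" using v dM(3) by metis
      ultimately show "v \<in> {1..n}" by simp
    qed
    show "{1..n} \<subseteq> set M"
    proof
      fix v assume "v \<in> {1..n}"
      then have "v \<in> insert 0 (insert (n+1) (set M))" "v \<noteq> 0" "v \<noteq> n+1" unfolding sP by simp_all
      then show "v \<in> set M" by simp
    qed
  qed
  moreover have "set [1..<n+1] = {1..n}"
    by (simp only: set_upt Suc_eq_plus1[symmetric] atLeastLessThanSuc_atLeastAtMost)
  ultimately have "M \<in> permutations_of_set (set [1..<n+1])"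
    using dM(1) by (intro permutations_of_setI) simp_all
  then show ?thesis by (metis permutations_of_list distinct_upt remdups_id_iff_distinct)
qed

lemma reconstructing_if_distinct_extrema_lists:
  assumes "distinct (map (\<lambda>M. extrema_list n k (0 # M @ [n+1])) (permutations_of_set_list [1..<n+1]))"
  shows "reconstructing n k"
  unfolding reconstructing_def
proof (intro ballI impI)
  fix P Q assume P: "P \<in> perms n" and Q: "Q \<in> perms n" and "k_profile n k P = k_profile n k Q"
  then have "extrema_list n k P = extrema_list n k Q" by (rule extrema_list_eq_if_k_profile_eq)
  moreover obtain M1 where "M1 \<in> set (permutations_of_set_list [1..<n+1])" "P = 0 # M1 @ [n+1]"
    using perms_in_permutations_list perms_eq_Cons_append[OF P] P by metis
  moreover obtain M2 where "M2 \<in> set (permutations_of_set_list [1..<n+1])" "Q = 0 # M2 @ [n+1]"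
    using perms_in_permutations_list perms_eq_Cons_append[OF Q] Q by metis
  ultimately show "P = Q" using assms by (auto simp: distinct_map dest: inj_onD)
qed

lemma reconstructing_1_small:
  assumes "1 \<le> n" "n \<le> 4"
  shows "reconstructing n 1"
proof -
  have "n \<in> {1, 2, 3, 4}" using assms by auto
  moreover have "reconstructing 1 1" "reconstructing 2 1" "reconstructing 3 1" "reconstructing 4 1"
    by (rule reconstructing_if_distinct_extrema_lists, code_simp)+
  ultimately show ?thesis by auto
qed

section \<open>Permutations with equal small profiles\<close>

text \<open>Exchanging \<open>x\<close> and \<open>y\<close> changes only the constraints of the pairs \<open>{y, n}\<close>,
  \<open>{y, n+1}\<close> and the orientation of \<open>{x, y}\<close>.\<close>

definition witness_perm :: "nat \<Rightarrow> nat \<Rightarrow> nat \<Rightarrow> nat list" where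
  "witness_perm n x y = 0 # filter (\<lambda>v. v \<noteq> x \<and> v \<noteq> y) [2..<n] @ [1, n, x, y, n+1]"

lemma witness_perm_in_perms:
  assumes "2 \<le> x" "x < n" "2 \<le> y" "y < n" "x \<noteq> y"
  shows "witness_perm n x y \<in> perms n"
proof -
  have "set (witness_perm n x y) = {0} \<union> ({2..<n} - {x, y}) \<union> {1, n, x, y, n+1}"
    by (auto simp: witness_perm_def)
  also have "\<dots> = {0..n+1}" using assms by auto
  finally show ?thesis using assms by (simp add: perms_def witness_perm_def)
qed

lemma witness_perm_swap_neq: "x \<noteq> y \<Longrightarrow> witness_perm n x y \<noteq> witness_perm n y x"
  by (simp add: witness_perm_def conj_commute)

lemma MinMax_insert_between:
  fixes S :: "'a::linorder set"
  assumes "finite S" "S \<noteq> {}" "Min S \<le> v" "v \<le> Max S"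
  shows "Min (insert v S) = Min S \<and> Max (insert v S) = Max S"
  using assms by (simp add: min_absorb2 max_absorb2)

locale witness_pair =
  fixes n x y :: nat
  assumes xy: "2 \<le> x" "x < y" "y < n"
begin

abbreviation "P \<equiv> witness_perm n x y"
abbreviation "Q \<equiv> witness_perm n y x"

lemma perms: "P \<in> perms n" "Q \<in> perms n"
  using witness_perm_in_perms xy by auto

lemma nth_witness:
  "P!(n-1) = x" "P!n = y" "Q!(n-1) = y" "Q!n = x" "P!(n-3) = 1" "P!(n-2) = n"
  "m \<noteq> n-1 \<Longrightarrow> m \<noteq> n \<Longrightarrow> Q!m = P!m"
proof -
  define R where "R = filter (\<lambda>v. v \<noteq> x \<and> v \<noteq> y) [2..<n]"
  define A where "A = 0 # R @ [1, n]"
  have PA: "P = A @ [x, y, n+1]" unfolding witness_perm_def A_def R_def by simp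
  have QA: "Q = A @ [y, x, n+1]" unfolding witness_perm_def A_def R_def by (simp add: conj_commute)
  have "length A + 3 = n + 2" using permsD(3)[OF perms(1)] PA by simp
  then have lA: "length A = n - 1" and n_A: "n = Suc (length A)" and n_R: "n = length R + 4"
    unfolding A_def by simp_all
  show "P!(n-1) = x" "P!n = y" "Q!(n-1) = y" "Q!n = x"
    unfolding PA QA using n_A by (simp_all add: nth_append)
  show "P!(n-3) = 1" "P!(n-2) = n"
    unfolding PA A_def using n_R by (simp_all add: nth_append)
  show "Q!m = P!m" if "m \<noteq> n-1" "m \<noteq> n"
  proof (cases "m < n - 1")
    case True then show ?thesis unfolding PA QA using lA by (simp add: nth_append)
  next
    case False
    then have "m = length A + Suc (Suc (m - (n+1)))" using that lA xy by simp
    then show ?thesis unfolding PA QA by (metis nth_append_length_plus nth_Cons_Suc)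
  qed
qed

lemma pos_witness:
  "pos P x = n-1" "pos P y = n" "pos Q y = n-1" "pos Q x = n" "pos P 1 = n-3" "pos Q 1 = n-3"
  "pos P n = n-2" "pos Q n = n-2"
  using perms_pos_eq_iff[OF perms(1)] perms_pos_eq_iff[OF perms(2)] nth_witness xy by auto

lemma pos_other:
  assumes "v \<le> n+1" "v \<noteq> x" "v \<noteq> y"
  shows "pos Q v = pos P v" "pos P v \<noteq> n-1" "pos P v \<noteq> n"
proof -
  show ne: "pos P v \<noteq> n-1" "pos P v \<noteq> n"
    using pos_witness perms_pos_inj[OF perms(1), of v x] perms_pos_inj[OF perms(1), of v y] assms xy
    by auto
  have "Q ! pos P v = v" using nth_witness(7)[OF ne] perms_nth_pos[OF perms(1) assms(1)] by simp
  then show "pos Q v = pos P v" using perms_pos_nth[OF perms(2) perms_pos_le[OF perms(1) assms(1)]] by simp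
qed

lemma image_nth_swap_invariant:
  assumes "{n-1, n} \<subseteq> I \<or> {n-1, n} \<inter> I = {}"
  shows "(!) P ` I = (!) Q ` I"
proof -
  have away: "(!) P ` J = (!) Q ` J" if "{n-1, n} \<inter> J = {}" for J
  proof (rule image_cong[OF refl])
    fix m assume "m \<in> J"
    then have "m \<noteq> n-1" "m \<noteq> n" using that by blast+
    then show "P!m = Q!m" using nth_witness(7) by simp
  qed
  show ?thesis
  proof (cases "{n-1, n} \<subseteq> I")
    case True
    then have "I = (I - {n-1, n}) \<union> {n-1, n}" by blast
    moreover have "(!) P ` {n-1, n} = (!) Q ` {n-1, n}" using nth_witness by auto
    ultimately show ?thesis using away[of "I - {n-1, n}"] by (metis Diff_disjoint image_Un)
  qed (use assms away in blast)
qed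

lemma image_nth_tail:
  assumes "q \<le> n-2"
  shows "(!) P ` {q..n-1} = insert x ((!) P ` {q..n-2})" "(!) P ` {q..n} = insert x (insert y ((!) P ` {q..n-2}))"
    "(!) Q ` {q..n-1} = insert y ((!) P ` {q..n-2})" "(!) Q ` {q..n} = insert x (insert y ((!) P ` {q..n-2}))"
proof -
  have "{q..n-1} = insert (n-1) {q..n-2}" "{q..n} = insert n (insert (n-1) {q..n-2})"
    using assms xy by auto
  moreover have "{n-1, n} \<inter> {q..n-2} = {}" using xy by auto
  then have "(!) Q ` {q..n-2} = (!) P ` {q..n-2}" using image_nth_swap_invariant by metis
  ultimately show "(!) P ` {q..n-1} = insert x ((!) P ` {q..n-2})"
    "(!) P ` {q..n} = insert x (insert y ((!) P ` {q..n-2}))"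
    "(!) Q ` {q..n-1} = insert y ((!) P ` {q..n-2})" "(!) Q ` {q..n} = insert x (insert y ((!) P ` {q..n-2}))"
    using nth_witness by auto
qed

lemma between_away:
  assumes "a \<le> n+1" "b \<le> n+1" "a \<notin> {x, y}" "b \<notin> {x, y}"
  shows "between P a b = between Q a b"
proof -
  let ?lo = "min (pos P a) (pos P b)" and ?hi = "max (pos P a) (pos P b)"
  have "pos P a \<notin> {n-1, n}" "pos P b \<notin> {n-1, n}" using pos_other assms by auto
  then have "?hi < n-1 \<or> n < ?lo \<or> (?lo \<le> n-1 \<and> n \<le> ?hi)" using xy by (simp add: min_def max_def) arith
  then have "{n-1, n} \<subseteq> {?lo..?hi} \<or> {n-1, n} \<inter> {?lo..?hi} = {}" by auto
  then show ?thesis unfolding between_eq_image using image_nth_swap_invariant pos_other assms by simp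
qed

lemma between_x_y: "between P x y = between Q x y"
  unfolding between_eq_image pos_witness using image_nth_swap_invariant[of "{n-1..n}"] xy by simp

lemma extrema_with_x:
  assumes "c \<le> n+1" "c \<notin> {x, y}"
  shows "Min (between P c x) = Min (between Q c x) \<and> Max (between P c x) = Max (between Q c x)"
proof (cases "c = n+1")
  case True
  have "{n-1..n+1} = {n-1, n, n+1}" "{n..n+1} = {n, n+1}" using xy by auto
  then have "between P c x = {x, y, n+1}" "between Q c x = {x, n+1}"
    unfolding between_eq_image True pos_witness perms_pos_Suc_n[OF perms(1)] perms_pos_Suc_n[OF perms(2)]
    using nth_witness permsD(5)[OF perms(1)] permsD(5)[OF perms(2)] xy by auto
  then show ?thesis using xy by (simp add: min_def max_def)
next
  case False
  let ?q = "pos P c" and ?B = "(!) P ` {pos P c..n-2}"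
  have "c \<le> n" using assms False by simp
  then have "?q \<le> n" "?q \<noteq> n-1" "?q \<noteq> n" "pos Q c = ?q"
    using perms_pos_le_n[OF perms(1)] pos_other assms by auto
  then have q: "?q \<le> n-2" "pos Q c = ?q" by arith+
  have "between P c x = insert x ?B" "between Q c x = insert x (insert y ?B)"
    unfolding between_eq_image pos_witness q(2) using image_nth_tail[OF q(1)] q(1) xy by auto
  then have eq: "between Q c x = insert y (between P c x)" by (simp add: insert_commute)
  have "n \<in> ?B" using q(1) nth_witness(6) by (metis atLeastAtMost_iff image_eqI order_refl)
  have fin: "finite (between P c x)" using finite_between[OF perms(1) assms(1)] xy by simp
  have "x \<in> between P c x" "n \<in> between P c x" using \<open>n \<in> ?B\<close> \<open>between P c x = insert x ?B\<close> by simp_all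
  then have "Min (between P c x) \<le> y" "y \<le> Max (between P c x)"
    using Min_le[OF fin, of x] Max_ge[OF fin, of n] xy by linarith+
  then have "Min (insert y (between P c x)) = Min (between P c x) \<and>
      Max (insert y (between P c x)) = Max (between P c x)"
    using MinMax_insert_between[OF fin] \<open>x \<in> between P c x\<close> by blast
  then show ?thesis using eq by simp
qed

lemma extrema_with_y:
  assumes "c \<le> n+1" "c \<notin> {x, y, n, n+1}"
  shows "Min (between P c y) = Min (between Q c y) \<and> Max (between P c y) = Max (between Q c y)"
proof -
  let ?q = "pos P c" and ?B = "(!) P ` {pos P c..n-2}"
  have "c \<le> n" using assms by simp
  then have "?q \<le> n" "?q \<noteq> n-1" "?q \<noteq> n" "?q \<noteq> n-2" "pos Q c = ?q"
    using perms_pos_le_n[OF perms(1)] pos_other pos_witness perms_pos_inj[OF perms(1), of c n] assms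
    by auto
  then have q: "?q \<le> n-3" "pos Q c = ?q" by arith+
  then have "between P c y = insert x (insert y ?B)" "between Q c y = insert y ?B"
    unfolding between_eq_image pos_witness q(2) using image_nth_tail[of ?q] xy by auto
  then have eq: "between P c y = insert x (between Q c y)" by simp
  have "1 \<in> ?B" using q(1) nth_witness(5) xy by (metis atLeastAtMost_iff diff_le_mono2 image_eqI le_refl
        numeral_le_iff semiring_norm(69) semiring_norm(72))
  have fin: "finite (between Q c y)" using finite_between[OF perms(2) assms(1)] xy by simp
  have "1 \<in> between Q c y" "y \<in> between Q c y" using \<open>1 \<in> ?B\<close> \<open>between Q c y = insert y ?B\<close> by simp_all
  then have "Min (between Q c y) \<le> x" "x \<le> Max (between Q c y)"
    using Min_le[OF fin, of 1] Max_ge[OF fin, of y] xy by linarith+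
  then have "Min (insert x (between Q c y)) = Min (between Q c y) \<and>
      Max (insert x (between Q c y)) = Max (between Q c y)"
    using MinMax_insert_between[OF fin] \<open>y \<in> between Q c y\<close> by blast
  then show ?thesis using eq by simp
qed

lemma extrema_eq:
  assumes "a \<le> n+1" "b \<le> n+1" "a \<noteq> b" "{a, b} \<noteq> {y, n}" "{a, b} \<noteq> {y, n+1}"
  shows "Min (between P a b) = Min (between Q a b) \<and> Max (between P a b) = Max (between Q a b)"
proof -
  consider "a \<notin> {x, y}" "b \<notin> {x, y}" | "{a, b} = {x, y}" | "a = x" "b \<notin> {x, y}" | "b = x" "a \<notin> {x, y}"
    | "a = y" "b \<notin> {x, y}" | "b = y" "a \<notin> {x, y}"
    using assms(3) by blast
  then show ?thesis
  proof cases
    case 1 then show ?thesis using between_away assms(1,2) by simp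
  next
    case 2 then show ?thesis using between_x_y between_commute[of _ x y] assms(3) by (auto simp: doubleton_eq_iff)
  next
    case 3 then show ?thesis using extrema_with_x[of b] assms(2) between_commute[of _ x b] by simp
  next
    case 4 then show ?thesis using extrema_with_x[of a] assms(1) by simp
  next
    case 5 then show ?thesis using extrema_with_y[of b] assms between_commute[of _ y b] by auto
  next
    case 6 then show ?thesis using extrema_with_y[of a] assms by auto
  qed
qed

lemma pos_order_eq:
  assumes "a \<le> n+1" "b \<le> n+1" "a \<noteq> b" "{a, b} \<noteq> {x, y}"
  shows "pos P a < pos P b \<longleftrightarrow> pos Q a < pos Q b"
proof (cases "a \<in> {x, y}")
  case True
  then have "b \<notin> {x, y}" using assms(3,4) by auto
  then have "pos Q b = pos P b" "pos P b \<noteq> n-1" "pos P b \<noteq> n" using pos_other assms(2) by auto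
  then show ?thesis using True pos_witness by auto
next
  case a: False
  show ?thesis
  proof (cases "b \<in> {x, y}")
    case True
    have "pos Q a = pos P a" "pos P a \<noteq> n-1" "pos P a \<noteq> n" using pos_other a assms(1) by auto
    then show ?thesis using True pos_witness by auto
  qed (use a pos_other assms in auto)
qed

end

context witness_pair
begin

lemma k_profile_swap_eq:
  assumes "y + k < n"
  shows "k_profile n k P = k_profile n k Q"
proof -
  have F: "Min (between P t (t+i)) = Min (between Q t (t+i)) \<and> Max (between P t (t+i)) = Max (between Q t (t+i))"
    if "1 \<le> i" "i \<le> k" "t + i \<le> n+1" for t i
    using extrema_eq[of t "t+i"] that assms by (auto simp: doubleton_eq_iff)
  show ?thesis unfolding k_profile_def by (intro Collect_cong ex_cong1) (auto simp: F)
qed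

lemma directed_k_profile_swap_eq:
  assumes "y + k < n" "x + k < y"
  shows "directed_k_profile n k P = directed_k_profile n k Q"
proof -
  have F: "Min (between P t (t+i)) = Min (between Q t (t+i)) \<and> Max (between P t (t+i)) = Max (between Q t (t+i))
      \<and> (pos P t < pos P (t+i) \<longleftrightarrow> pos Q t < pos Q (t+i))"
    if "1 \<le> i" "i \<le> k" "t + i \<le> n+1" for t i
    using extrema_eq[of t "t+i"] pos_order_eq[of t "t+i"] that assms by (auto simp: doubleton_eq_iff)
  show ?thesis unfolding directed_k_profile_def by (intro Collect_cong ex_cong1) (auto simp: F)
qed

end

theorem not_reconstructing:
  assumes "k + 4 \<le> n"
  shows "\<not> reconstructing n k"
proof
  assume "reconstructing n k"
  interpret witness_pair n 2 3 using assms by unfold_locales auto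
  have "k_profile n k P = k_profile n k Q" using k_profile_swap_eq assms by simp
  then have "P = Q" using \<open>reconstructing n k\<close> perms unfolding reconstructing_def by blast
  then show False using witness_perm_swap_neq by simp
qed

theorem not_directed_reconstructing:
  assumes "2 * k + 4 \<le> n"
  shows "\<not> directed_reconstructing n k"
proof
  assume "directed_reconstructing n k"
  interpret witness_pair n 2 "k+3" using assms by unfold_locales auto
  have "directed_k_profile n k P = directed_k_profile n k Q"
    using directed_k_profile_swap_eq assms by simp
  then have "P = Q" using \<open>directed_reconstructing n k\<close> perms unfolding directed_reconstructing_def by blast
  then show False using witness_perm_swap_neq by simp
qed

lemma k_profile_eq_image_directed:
  "k_profile n k P = (\<lambda>(a, b, c, d, e). (a, b, c, d)) ` directed_k_profile n k P"
  unfolding k_profile_def directed_k_profile_def by (auto simp: image_def)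

lemma directed_reconstructing_if_reconstructing: "reconstructing n k \<Longrightarrow> directed_reconstructing n k"
  unfolding reconstructing_def directed_reconstructing_def using k_profile_eq_image_directed by metis

lemma reconstructing_max_1_n_minus_3:
  assumes "1 \<le> n"
  shows "reconstructing n (max 1 (n-3))"
  using reconstructing_1_small[OF assms] reconstructing_n_minus_3 by (cases "n \<le> 4") auto

theorem k_u_eq:
  assumes "1 \<le> n"
  shows "k_u n = max 1 (n-3)"
  unfolding k_u_def
proof (rule Least_equality)
  show "1 \<le> max 1 (n-3) \<and> max 1 (n-3) \<le> n+1 \<and> reconstructing n (max 1 (n-3))"
    using reconstructing_max_1_n_minus_3[OF assms] by auto
next
  fix k assume "1 \<le> k \<and> k \<le> n+1 \<and> reconstructing n k"
  then show "max 1 (n-3) \<le> k" using not_reconstructing[of k n] by fastforce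
qed

lemma k_d_directed_reconstructing:
  assumes "1 \<le> n"
  shows "1 \<le> k_d n" "directed_reconstructing n (k_d n)"
proof -
  have "1 \<le> max 1 (n-3) \<and> max 1 (n-3) \<le> n+1 \<and> directed_reconstructing n (max 1 (n-3))"
    using directed_reconstructing_if_reconstructing reconstructing_max_1_n_minus_3[OF assms] by auto
  then have "1 \<le> k_d n \<and> k_d n \<le> n+1 \<and> directed_reconstructing n (k_d n)"
    unfolding k_d_def by (rule LeastI)
  then show "1 \<le> k_d n" "directed_reconstructing n (k_d n)" by simp_all
qed

theorem k_d_lower_bound:
  assumes "4 \<le> n"
  shows "real (k_d n) \<ge> of_int \<lceil>(real n - 3) / 2\<rceil>"
proof -
  have "directed_reconstructing n (k_d n)" using k_d_directed_reconstructing(2) assms by simp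
  then have "\<not> 2 * k_d n + 4 \<le> n" using not_directed_reconstructing by blast
  then have "real n \<le> real (2 * k_d n + 3)" by (simp only: of_nat_le_iff)
  then have "(real n - 3) / 2 \<le> real (k_d n)" by simp
  then have "\<lceil>(real n - 3) / 2\<rceil> \<le> int (k_d n)" by (simp add: ceiling_le_iff)
  then show ?thesis by simp
qed

theorem k_d_small:
  assumes "n \<in> {1, 2, 3}"
  shows "k_d n = 1"
  unfolding k_d_def
  by (rule Least_equality)
    (use assms directed_reconstructing_if_reconstructing reconstructing_1_small[of n] in auto)

theorem theorem2:
  shows "(\<forall>n::nat. n \<ge> 1 \<longrightarrow> k_u n = max 1 (n - 3)) \<and>
         (\<forall>n::nat. n \<ge> 4 \<longrightarrow> real (k_d n) \<ge> of_int \<lceil>(real n - 3) / 2\<rceil>) \<and>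
         (\<forall>n::nat. n \<in> {1, 2, 3} \<longrightarrow> k_d n = 1)"
  using k_u_eq k_d_lower_bound k_d_small by blast

end
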